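(* Let $\mathbb{K}$ be a field, $R=\mathbb{K}[X_1,\ldots,X_n]$, and $J \subsetneq I \subset R$ monomial ideals. Fix a variable $X_i$ and let $I^1, J^1 \subset R[Y]$ be the $1$-step polarizations of $I$ and $J$ with respect to $X_i$. Then \[ \operatorname{sdepth} I/J = \operatorname{sdepth} I^1/J^1 - 1. \]
   Context: $1$-step polarization: if $u_1,\dots,u_m$ are the minimal monomial generators of a monomial ideal $I\subset R$, its $1$-step polarization with respect to $X_i$ is the ideal $I^1\subset R[Y]$ ($Y$ a new variable) generated by $v_1,\dots,v_m$, where $v_j=\frac{Y}{X_i}u_j$ if $X_i^2\mid u_j$, and $v_j=u_j$ otherwise. Stanley depth: with the fine multigrading, a Stanley decomposition of a finitely generated multigraded module $M$ is a finite family $(\mathbb{K}[Z_k], m_k)$ with $m_k$ homogeneous, $Z_k$ subsets of the variables, $m_k\mathbb{K}[Z_k]$ free over $\mathbb{K}[Z_k]$, and $M=\bigoplus_k m_k\mathbb{K}[Z_k]$ as multigraded $\mathbb{K}$-vector spaces; its depth is $\min_k|Z_k|$, and $\operatorname{sdepth}M$ is the maximal depth of a Stanley decomposition. *)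

theory Defs
  imports Main
begin

text \<open>Monomials of K[X_0,...,X_{n-1}] are represented by exponent vectors
  a :: nat => nat with a j = 0 for j >= n.  In the ring R[Y] with n variables
  X_0..X_{n-1}, the new variable Y is X_n.\<close>

type_synonym mon = "nat \<Rightarrow> nat"

definition monoms :: "nat \<Rightarrow> mon set" where
  "monoms n = {a. \<forall>j\<ge>n. a j = 0}"

definition mdvd :: "mon \<Rightarrow> mon \<Rightarrow> bool" where
  "mdvd a b \<longleftrightarrow> (\<forall>j. a j \<le> b j)"

definition mmult :: "mon \<Rightarrow> mon \<Rightarrow> mon" where
  "mmult a b = (\<lambda>j. a j + b j)"

text \<open>A monomial ideal of K[X_0..X_{n-1}] is identified with the set of monomials
  it contains (which is a K-basis of it): an upward closed set of monomials.\<close>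
definition monomial_ideal :: "nat \<Rightarrow> mon set \<Rightarrow> bool" where
  "monomial_ideal n I \<longleftrightarrow> I \<subseteq> monoms n \<and>
     (\<forall>a\<in>I. \<forall>b\<in>monoms n. mdvd a b \<longrightarrow> b \<in> I)"

definition mingens :: "mon set \<Rightarrow> mon set" where
  "mingens I = {a\<in>I. \<forall>b\<in>I. mdvd b a \<longrightarrow> b = a}"

definition ideal_gen :: "nat \<Rightarrow> mon set \<Rightarrow> mon set" where
  "ideal_gen n G = {b\<in>monoms n. \<exists>a\<in>G. mdvd a b}"

definition pol1_mon :: "nat \<Rightarrow> nat \<Rightarrow> mon \<Rightarrow> mon" where
  "pol1_mon n i u = (if 2 \<le> u i then u(i := u i - 1, n := u n + 1) else u)"

definition polarization1 :: "nat \<Rightarrow> nat \<Rightarrow> mon set \<Rightarrow> mon set" where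
  "polarization1 n i I = ideal_gen (Suc n) (pol1_mon n i ` mingens I)"

text \<open>The multigraded
  K-vector space I/J has the monomials in I - J as homogeneous basis, each graded
  piece being at most one-dimensional.  A pair (m, Z) stands for the summand
  m K[Z]: m is a (nonzero) homogeneous element, i.e. (up to a scalar) a monomial
  of I - J; m K[Z] is a free K[Z]-submodule of I/J iff m u \<notin> J for all monomials u
  in the variables Z; and I/J is the direct sum of the m K[Z] as multigraded
  K-vector spaces iff every monomial of I - J lies in exactly one of them.\<close>
definition stanley_decomp :: "nat \<Rightarrow> mon set \<Rightarrow> mon set \<Rightarrow> (mon \<times> nat set) set \<Rightarrow> bool" where
  "stanley_decomp n I J D \<longleftrightarrow> finite D \<and>
     (\<forall>(m, Z)\<in>D. Z \<subseteq> {..<n} \<and> m \<in> monoms n \<and>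
        (\<forall>u. (\<forall>j. j \<notin> Z \<longrightarrow> u j = 0) \<longrightarrow> mmult m u \<in> I - J)) \<and>
     (\<forall>c\<in>I - J. \<exists>!p. p \<in> D \<and>
        (\<exists>u. (\<forall>j. j \<notin> snd p \<longrightarrow> u j = 0) \<and> c = mmult (fst p) u))"

definition sdecomp_depth :: "(mon \<times> nat set) set \<Rightarrow> nat" where
  "sdecomp_depth D = Min ((\<lambda>p. card (snd p)) ` D)"

definition sdepth :: "nat \<Rightarrow> mon set \<Rightarrow> mon set \<Rightarrow> nat" where
  "sdepth n I J = Max {d. \<exists>D. stanley_decomp n I J D \<and> d = sdecomp_depth D}"

end

theory Submission
  imports Defs "HOL.Topological_Spaces"
begin

text \<open>
  Write Y for X_n and let depol send a monomial of K[X,Y] to K[X] by dropping Y and replacing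
  a nonzero X_i-exponent b by 1 if Y does not occur and by b + 1 if it does. Then the
  polarization of u divides c iff u divides depol c, so c lies in I^1 iff depol c lies in I,
  and depol inverts the polarization of monomials.

  Consequently a Stanley cone m K[Z] of I/J pulls back under depol to a Stanley cone of
  I^1/J^1 generated by the polarization of m with one more free variable (X_i or Y): this gives
  sdepth I^1/J^1 \<ge> sdepth I/J + 1. Conversely, the monomials of K[X] whose polarization lies in
  a given Stanley cone of I^1/J^1 form finitely many cones with X_i fixed or a single cone with
  X_i free, each with at most one free variable less, which gives the reverse inequality.
  Both Stanley depths are attained since Stanley decompositions exist: by Dickson's lemma I and J
  have finitely many minimal generators, and the monomials dividing a common multiple g of them
  generate a decomposition, every monomial a lying in the cone of its truncation min(a, g).
\<close>

section \<open>Cones and Stanley decompositions\<close>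

definition cone :: "mon \<Rightarrow> nat set \<Rightarrow> mon set" where
  "cone m Z = {c. \<forall>j. m j \<le> c j \<and> (j \<notin> Z \<longrightarrow> c j = m j)}"

lemma ex_mmult_iff_mem_cone:
  "(\<exists>u. (\<forall>j. j \<notin> Z \<longrightarrow> u j = 0) \<and> c = mmult m u) \<longleftrightarrow> c \<in> cone m Z"
proof
  assume "c \<in> cone m Z"
  then show "\<exists>u. (\<forall>j. j \<notin> Z \<longrightarrow> u j = 0) \<and> c = mmult m u"
    by (intro exI[of _ "\<lambda>j. c j - m j"]) (auto simp: cone_def mmult_def fun_eq_iff)
qed (auto simp: cone_def mmult_def)

lemma all_mmult_in_iff_cone_subset:
  "(\<forall>u. (\<forall>j. j \<notin> Z \<longrightarrow> u j = 0) \<longrightarrow> mmult m u \<in> X) \<longleftrightarrow> cone m Z \<subseteq> X"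
  unfolding subset_iff ex_mmult_iff_mem_cone[symmetric] by blast

lemma stanley_decomp_iff_cones:
  "stanley_decomp n I J D \<longleftrightarrow> finite D \<and>
     (\<forall>(m, Z)\<in>D. Z \<subseteq> {..<n} \<and> m \<in> monoms n \<and> cone m Z \<subseteq> I - J) \<and>
     (\<forall>c\<in>I - J. \<exists>!p. p \<in> D \<and> c \<in> cone (fst p) (snd p))"
  unfolding stanley_decomp_def all_mmult_in_iff_cone_subset ex_mmult_iff_mem_cone by simp

lemma stanley_decomp_piece:
  assumes "stanley_decomp n I J D" and "p \<in> D"
  shows "snd p \<subseteq> {..<n} \<and> fst p \<in> monoms n \<and> cone (fst p) (snd p) \<subseteq> I - J"
proof -
  obtain m Z where "p = (m, Z)" by fastforce
  then show ?thesis using assms unfolding stanley_decomp_iff_cones by auto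
qed

lemma stanley_decomp_cover:
  assumes "stanley_decomp n I J D" and "c \<in> I - J"
  shows "\<exists>!p. p \<in> D \<and> c \<in> cone (fst p) (snd p)"
  using assms unfolding stanley_decomp_iff_cones by blast

lemma stanley_decomp_nonempty: "stanley_decomp n I J D \<Longrightarrow> I - J \<noteq> {} \<Longrightarrow> D \<noteq> {}"
  using stanley_decomp_cover by blast

lemma cone_subset_monoms: "m \<in> monoms n \<Longrightarrow> Z \<subseteq> {..<n} \<Longrightarrow> cone m Z \<subseteq> monoms n"
  unfolding cone_def monoms_def by (auto, metis lessThan_iff not_le subsetD)

lemma all_split_pair: "(\<forall>j. P j) \<longleftrightarrow> P i \<and> P k \<and> (\<forall>j. j \<noteq> i \<longrightarrow> j \<noteq> k \<longrightarrow> P j)"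
  by (metis (mono_tags))

lemma mem_cone_split:
  "c \<in> cone m Z \<longleftrightarrow> (m i \<le> c i \<and> (i \<notin> Z \<longrightarrow> c i = m i)) \<and> (m k \<le> c k \<and> (k \<notin> Z \<longrightarrow> c k = m k)) \<and>
     (\<forall>j. j \<noteq> i \<longrightarrow> j \<noteq> k \<longrightarrow> m j \<le> c j \<and> (j \<notin> Z \<longrightarrow> c j = m j))"
  unfolding cone_def mem_Collect_eq by (rule all_split_pair)

lemma sdecomp_depth_le_card: "finite D \<Longrightarrow> p \<in> D \<Longrightarrow> sdecomp_depth D \<le> card (snd p)"
  unfolding sdecomp_depth_def by (rule Min_le) auto

lemma sdecomp_depth_le_shift:
  assumes "finite D" and "finite E" and "E \<noteq> {}"
    and "\<And>q. q \<in> E \<Longrightarrow> \<exists>p\<in>D. card (snd p) + k \<le> card (snd q) + l"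
  shows "sdecomp_depth D + k \<le> sdecomp_depth E + l"
proof -
  have "sdecomp_depth E \<in> (\<lambda>q. card (snd q)) ` E"
    unfolding sdecomp_depth_def using assms(2,3) by (intro Min_in) auto
  then obtain q where q: "q \<in> E" "sdecomp_depth E = card (snd q)" by blast
  then obtain p where p: "p \<in> D" "card (snd p) + k \<le> card (snd q) + l" using assms(4) by blast
  have "sdecomp_depth D \<le> card (snd p)" using sdecomp_depth_le_card[OF assms(1) p(1)] .
  then show ?thesis using p(2) q(2) by linarith
qed

lemma finite_sdecomp_depths:
  assumes "I - J \<noteq> {}"
  shows "finite {d. \<exists>D. stanley_decomp n I J D \<and> d = sdecomp_depth D}"
proof (rule finite_subset)
  show "{d. \<exists>D. stanley_decomp n I J D \<and> d = sdecomp_depth D} \<subseteq> {..n}"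
  proof
    fix d assume "d \<in> {d. \<exists>D. stanley_decomp n I J D \<and> d = sdecomp_depth D}"
    then obtain D where D: "stanley_decomp n I J D" and d: "d = sdecomp_depth D" by blast
    then obtain p where p: "p \<in> D" using stanley_decomp_nonempty[OF D assms] by blast
    have "sdecomp_depth D \<le> card (snd p)"
      using D p by (intro sdecomp_depth_le_card) (simp add: stanley_decomp_iff_cones)
    also have "card (snd p) \<le> card {..<n}"
      using stanley_decomp_piece[OF D p] by (intro card_mono) auto
    finally show "d \<in> {..n}" using d by simp
  qed
qed simp

lemma sdecomp_depth_le_sdepth:
  assumes "stanley_decomp n I J D" and "I - J \<noteq> {}"
  shows "sdecomp_depth D \<le> sdepth n I J"
  unfolding sdepth_def using finite_sdecomp_depths[OF assms(2)] assms(1) by (intro Max_ge) auto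

lemma sdepth_attained:
  assumes "stanley_decomp n I J D" and "I - J \<noteq> {}"
  obtains D' where "stanley_decomp n I J D'" and "sdepth n I J = sdecomp_depth D'"
proof -
  have "sdepth n I J \<in> {d. \<exists>D. stanley_decomp n I J D \<and> d = sdecomp_depth D}"
    unfolding sdepth_def using finite_sdecomp_depths[OF assms(2)] assms(1) by (intro Max_in) auto
  then show ?thesis using that by blast
qed

section \<open>Existence of Stanley decompositions\<close>

lemma monomial_ideal_subset: "monomial_ideal n I \<Longrightarrow> I \<subseteq> monoms n"
  by (simp add: monomial_ideal_def)

lemma monomial_ideal_mdvd_closed:
  "monomial_ideal n I \<Longrightarrow> a \<in> I \<Longrightarrow> b \<in> monoms n \<Longrightarrow> mdvd a b \<Longrightarrow> b \<in> I"
  by (auto simp: monomial_ideal_def)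

lemma ex_mingens_mdvd:
  assumes I: "monomial_ideal n I" and a: "a \<in> I"
  shows "\<exists>u\<in>mingens I. mdvd u a"
proof -
  let ?P = "\<lambda>u. u \<in> I \<and> mdvd u a"
  have "?P a" using a by (simp add: mdvd_def)
  from ex_has_least_nat[of ?P a "\<lambda>u. \<Sum>j<n. u j", OF this]
  obtain u where u: "?P u" and least: "\<And>v. ?P v \<Longrightarrow> (\<Sum>j<n. u j) \<le> (\<Sum>j<n. v j)"
    by blast
  have "u \<in> mingens I"
    unfolding mingens_def
  proof (intro CollectI conjI ballI impI)
    show "u \<in> I" using u by simp
    fix v assume v: "v \<in> I" "mdvd v u"
    have le: "\<forall>j\<in>{..<n}. v j \<le> u j" using v by (auto simp: mdvd_def)
    have "\<forall>j\<in>{..<n}. v j = u j"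
    proof (rule ccontr)
      assume "\<not> (\<forall>j\<in>{..<n}. v j = u j)"
      then obtain k where "k \<in> {..<n}" "v k < u k" using le by (metis order_le_neq_trans)
      then have "(\<Sum>j<n. v j) < (\<Sum>j<n. u j)"
        using sum_strict_mono_ex1[of "{..<n}" v u] le by auto
      moreover have "?P v" using v u by (auto simp: mdvd_def intro: order_trans)
      ultimately show False using least by fastforce
    qed
    moreover have "v \<in> monoms n" "u \<in> monoms n"
      using v u monomial_ideal_subset[OF I] by auto
    ultimately show "v = u"
      by (auto simp: monoms_def fun_eq_iff) (metis lessThan_iff not_le)
  qed
  then show ?thesis using u by blast
qed

lemma ex_mono_subseq_nat:
  fixes s :: "nat \<Rightarrow> nat"
  shows "\<exists>f. strict_mono f \<and> incseq (s \<circ> f)"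
proof -
  obtain f :: "nat \<Rightarrow> nat" where f: "strict_mono f" "monoseq (s \<circ> f)"
    using seq_monosub[of s] by (auto simp: o_def)
  show ?thesis
  proof (cases "incseq (s \<circ> f)")
    case False
    then have dec: "decseq (s \<circ> f)" using f(2) monoseq_iff by blast
    define v where "v = (LEAST x. x \<in> range (s \<circ> f))"
    obtain t0 where t0: "s (f t0) = v"
      using LeastI[of "\<lambda>x. x \<in> range (s \<circ> f)" "s (f 0)"] by (auto simp: v_def)
    have "s (f (t + t0)) = v" for t
    proof (rule antisym)
      show "s (f (t + t0)) \<le> v" using decseqD[OF dec, of t0 "t + t0"] t0 by simp
      show "v \<le> s (f (t + t0))" unfolding v_def by (rule Least_le) simp
    qed
    moreover have "strict_mono (\<lambda>t. f (t + t0))" using f(1) by (auto simp: strict_mono_def)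
    ultimately show ?thesis by (intro exI[of _ "\<lambda>t. f (t + t0)"]) (simp add: incseq_def o_def)
  qed (use f in blast)
qed

lemma ex_mono_subseq_coords:
  fixes s :: "nat \<Rightarrow> mon"
  shows "\<exists>f. strict_mono f \<and> (\<forall>j<k. incseq (\<lambda>t. s (f t) j))"
proof (induction k)
  case 0
  show ?case by (intro exI[of _ id]) (simp add: strict_mono_def)
next
  case (Suc k)
  then obtain f where f: "strict_mono f" "\<forall>j<k. incseq (\<lambda>t. s (f t) j)" by blast
  obtain g where g: "strict_mono g" "incseq ((\<lambda>t. s (f t) k) \<circ> g)"
    using ex_mono_subseq_nat by blast
  have "incseq (\<lambda>t. s (f (g t)) j)" if "j < Suc k" for j
  proof (cases "j = k")
    case False
    with that f(2) have "incseq (\<lambda>t. s (f t) j)" by simp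
    then show ?thesis using g(1) by (simp add: incseq_def strict_mono_less_eq)
  qed (use g(2) in \<open>simp add: o_def\<close>)
  moreover have "strict_mono (\<lambda>t. f (g t))" using f(1) g(1) by (simp add: strict_mono_def)
  ultimately show ?case by blast
qed

lemma ex_mdvd_pair:
  fixes s :: "nat \<Rightarrow> mon"
  assumes "\<And>t. s t \<in> monoms n"
  shows "\<exists>t t'. t < t' \<and> mdvd (s t) (s t')"
proof -
  obtain f where f: "strict_mono f" "\<forall>j<n. incseq (\<lambda>t. s (f t) j)"
    using ex_mono_subseq_coords by blast
  have "mdvd (s (f 0)) (s (f 1))"
    unfolding mdvd_def
  proof
    fix j show "s (f 0) j \<le> s (f 1) j"
      using f(2) assms[of "f 0"] by (cases "j < n") (auto simp: incseq_def monoms_def)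
  qed
  moreover have "f 0 < f 1" using f(1) by (simp add: strict_mono_def)
  ultimately show ?thesis by blast
qed

lemma finite_mingens:
  assumes I: "monomial_ideal n I"
  shows "finite (mingens I)"
proof (rule ccontr)
  assume "infinite (mingens I)"
  then obtain s :: "nat \<Rightarrow> mon" where s: "inj s" "range s \<subseteq> mingens I"
    using infinite_countable_subset by blast
  have "s t \<in> monoms n" for t using s(2) monomial_ideal_subset[OF I] by (auto simp: mingens_def)
  then obtain t t' where "t < t'" "mdvd (s t) (s t')" using ex_mdvd_pair by blast
  moreover have "s t \<in> I" "s t' \<in> mingens I" using s(2) by (auto simp: mingens_def)
  ultimately have "s t = s t'" by (auto simp: mingens_def)
  with s(1) \<open>t < t'\<close> show False by (auto dest: injD)
qed

definition mtrunc :: "mon \<Rightarrow> mon \<Rightarrow> mon" where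
  "mtrunc g a = (\<lambda>j. min (a j) (g j))"

lemma finite_mdvd_box:
  assumes "g \<in> monoms n"
  shows "finite {b. mdvd b g}"
proof (rule finite_subset)
  let ?N = "\<Sum>j<n. g j"
  show "{b. mdvd b g} \<subseteq> {b. \<forall>j. (j \<in> {..<n} \<longrightarrow> b j \<in> {..?N}) \<and> (j \<notin> {..<n} \<longrightarrow> b j = 0)}"
  proof (intro subsetI CollectI allI conjI impI)
    fix b j assume "b \<in> {b. mdvd b g}"
    then have b: "b j \<le> g j" by (simp add: mdvd_def)
    show "b j \<in> {..?N}" if "j \<in> {..<n}"
      using b member_le_sum[of j "{..<n}" g] that by simp
    show "b j = 0" if "j \<notin> {..<n}"
      using b assms that by (simp add: monoms_def)
  qed
qed (intro finite_set_of_finite_funs; simp)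

lemma mem_ideal_iff_mtrunc:
  assumes K: "monomial_ideal n K" and bound: "\<And>u. u \<in> mingens K \<Longrightarrow> mdvd u g"
    and a: "a \<in> monoms n"
  shows "a \<in> K \<longleftrightarrow> mtrunc g a \<in> K"
proof
  have trunc_monoms: "mtrunc g a \<in> monoms n" using a by (auto simp: mtrunc_def monoms_def)
  assume "a \<in> K"
  then obtain u where u: "u \<in> mingens K" "mdvd u a" using ex_mingens_mdvd[OF K] by blast
  then have "mdvd u (mtrunc g a)" using bound by (auto simp: mdvd_def mtrunc_def)
  then show "mtrunc g a \<in> K"
    using monomial_ideal_mdvd_closed[OF K _ trunc_monoms] u(1) by (auto simp: mingens_def)
next
  assume "mtrunc g a \<in> K"
  moreover have "mdvd (mtrunc g a) a" by (simp add: mtrunc_def mdvd_def)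
  ultimately show "a \<in> K" using monomial_ideal_mdvd_closed[OF K _ a] by blast
qed

lemma mem_cone_mtrunc_iff:
  assumes "mdvd b g" and "a \<in> monoms n" and "g \<in> monoms n"
  shows "a \<in> cone b {j. j < n \<and> b j = g j} \<longleftrightarrow> mtrunc g a = b"
proof -
  have "b j \<le> a j \<and> (j \<notin> {j. j < n \<and> b j = g j} \<longrightarrow> a j = b j) \<longleftrightarrow> min (a j) (g j) = b j"
    for j
  proof (cases "j < n")
    case True
    have "b j \<le> g j" using assms(1) by (simp add: mdvd_def)
    with True show ?thesis by (cases "b j = g j") (auto simp: min_def)
  next
    case False
    then have "a j = 0" "g j = 0" using assms(2,3) by (simp_all add: monoms_def)
    moreover have "b j \<le> g j" using assms(1) by (simp add: mdvd_def)
    ultimately show ?thesis by simp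
  qed
  then show ?thesis by (simp add: cone_def mtrunc_def fun_eq_iff)
qed

lemma stanley_decomp_mtrunc:
  assumes I: "I \<subseteq> monoms n" and g: "g \<in> monoms n"
    and trunc: "\<And>a. a \<in> monoms n \<Longrightarrow> a \<in> I - J \<longleftrightarrow> mtrunc g a \<in> I - J"
  shows "stanley_decomp n I J ((\<lambda>b. (b, {j. j < n \<and> b j = g j})) ` {b \<in> I - J. mdvd b g})"
    (is "stanley_decomp n I J ?D")
proof -
  let ?Z = "\<lambda>b. {j. j < n \<and> b j = g j}"
  have cone_iff: "a \<in> cone b (?Z b) \<longleftrightarrow> mtrunc g a = b" if "mdvd b g" "a \<in> monoms n" for a b
    using mem_cone_mtrunc_iff[OF that g] by simp
  have mtrunc_mdvd: "mdvd (mtrunc g a) g" for a by (simp add: mtrunc_def mdvd_def)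
  show ?thesis
    unfolding stanley_decomp_iff_cones
  proof (intro conjI ballI)
    show "finite ?D" using finite_mdvd_box[OF g] by simp
  next
    fix p assume "p \<in> ?D"
    then obtain b where b: "b \<in> I - J" "mdvd b g" and p: "p = (b, ?Z b)" by auto
    have bm: "b \<in> monoms n" and Zb: "?Z b \<subseteq> {..<n}" using b I by auto
    have "cone b (?Z b) \<subseteq> I - J"
    proof
      fix a assume a: "a \<in> cone b (?Z b)"
      then have "a \<in> monoms n" using cone_subset_monoms[OF bm Zb] by blast
      with a show "a \<in> I - J" using cone_iff b trunc by blast
    qed
    then show "case p of (m, Z) \<Rightarrow> Z \<subseteq> {..<n} \<and> m \<in> monoms n \<and> cone m Z \<subseteq> I - J"
      using p bm Zb by simp
  next
    fix a assume a: "a \<in> I - J"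
    then have am: "a \<in> monoms n" using I by blast
    show "\<exists>!p. p \<in> ?D \<and> a \<in> cone (fst p) (snd p)"
    proof
      show "(mtrunc g a, ?Z (mtrunc g a)) \<in> ?D \<and> a \<in> cone (fst (mtrunc g a, ?Z (mtrunc g a)))
          (snd (mtrunc g a, ?Z (mtrunc g a)))"
        using a am trunc cone_iff mtrunc_mdvd by auto
    next
      fix p assume "p \<in> ?D \<and> a \<in> cone (fst p) (snd p)"
      then show "p = (mtrunc g a, ?Z (mtrunc g a))" using cone_iff am by auto
    qed
  qed
qed

lemma stanley_decomp_exists:
  assumes I: "monomial_ideal n I" and J: "monomial_ideal n J"
  shows "\<exists>D. stanley_decomp n I J D"
proof -
  define G where "G = mingens I \<union> mingens J"
  define g where "g = (\<lambda>j. \<Sum>u\<in>G. u j)"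
  have G: "finite G" "G \<subseteq> monoms n"
    using finite_mingens[OF I] finite_mingens[OF J] monomial_ideal_subset[OF I]
      monomial_ideal_subset[OF J] by (auto simp: G_def mingens_def)
  have bound: "mdvd u g" if "u \<in> G" for u
    unfolding mdvd_def g_def using G(1) that by (auto intro: member_le_sum)
  have g: "g \<in> monoms n" using G(2) by (auto simp: g_def monoms_def intro!: sum.neutral)
  have "a \<in> I - J \<longleftrightarrow> mtrunc g a \<in> I - J" if "a \<in> monoms n" for a
    using mem_ideal_iff_mtrunc[OF I _ that] mem_ideal_iff_mtrunc[OF J _ that] bound
    by (auto simp: G_def)
  then show ?thesis
    using stanley_decomp_mtrunc[OF monomial_ideal_subset[OF I] g] by blast
qed

section \<open>Depolarization\<close>

definition depol :: "nat \<Rightarrow> nat \<Rightarrow> mon \<Rightarrow> mon" where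
  "depol n i c = (c(n := 0))(i := (if c i = 0 then 0 else if c n = 0 then 1 else Suc (c i)))"

lemma mdvd_pol1_mon_iff:
  assumes "i \<noteq> n" and "u n = 0"
  shows "mdvd (pol1_mon n i u) c \<longleftrightarrow> mdvd u (depol n i c)"
proof -
  have "pol1_mon n i u i \<le> c i \<and> pol1_mon n i u n \<le> c n \<longleftrightarrow> u i \<le> depol n i c i"
    using assms by (auto simp: pol1_mon_def depol_def)
  moreover have "pol1_mon n i u j = u j" "depol n i c j = c j" if "j \<noteq> i" "j \<noteq> n" for j
    using that by (simp_all add: pol1_mon_def depol_def)
  moreover have "u n \<le> depol n i c n"
    using assms by (simp add: depol_def)
  ultimately show ?thesis
    unfolding mdvd_def all_split_pair[where i=i and k=n and P="\<lambda>j. pol1_mon n i u j \<le> c j"]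
      all_split_pair[where i=i and k=n and P="\<lambda>j. u j \<le> depol n i c j"]
    by auto
qed

lemma depol_monoms: "i < n \<Longrightarrow> c \<in> monoms (Suc n) \<Longrightarrow> depol n i c \<in> monoms n"
  by (auto simp: depol_def monoms_def)

lemma pol1_mon_monoms: "i < n \<Longrightarrow> a \<in> monoms n \<Longrightarrow> pol1_mon n i a \<in> monoms (Suc n)"
  by (auto simp: pol1_mon_def monoms_def)

lemma depol_pol1_mon: "i < n \<Longrightarrow> a \<in> monoms n \<Longrightarrow> depol n i (pol1_mon n i a) = a"
  by (auto simp: depol_def pol1_mon_def monoms_def fun_eq_iff)

lemma mem_polarization1_iff:
  assumes I: "monomial_ideal n I" and i: "i < n" and c: "c \<in> monoms (Suc n)"
  shows "c \<in> polarization1 n i I \<longleftrightarrow> depol n i c \<in> I"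
proof
  assume "c \<in> polarization1 n i I"
  then obtain u where u: "u \<in> mingens I" "mdvd (pol1_mon n i u) c"
    by (auto simp: polarization1_def ideal_gen_def)
  have "u \<in> I" using u by (simp add: mingens_def)
  moreover have "mdvd u (depol n i c)"
    using u \<open>u \<in> I\<close> monomial_ideal_subset[OF I] i mdvd_pol1_mon_iff
    by (auto simp: monoms_def)
  ultimately show "depol n i c \<in> I"
    using monomial_ideal_mdvd_closed[OF I _ depol_monoms[OF i c]] by blast
next
  assume "depol n i c \<in> I"
  then obtain u where u: "u \<in> mingens I" "mdvd u (depol n i c)"
    using ex_mingens_mdvd[OF I] by blast
  have "u \<in> I" using u by (simp add: mingens_def)
  then have "mdvd (pol1_mon n i u) c"
    using u monomial_ideal_subset[OF I] i mdvd_pol1_mon_iff by (auto simp: monoms_def)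
  then show "c \<in> polarization1 n i I"
    using u c by (auto simp: polarization1_def ideal_gen_def)
qed

lemma polarization1_subset: "polarization1 n i I \<subseteq> monoms (Suc n)"
  by (auto simp: polarization1_def ideal_gen_def)

lemma mem_polarization1_diff_iff:
  assumes "monomial_ideal n I" "monomial_ideal n J" "i < n"
  shows "c \<in> polarization1 n i I - polarization1 n i J \<longleftrightarrow>
         c \<in> monoms (Suc n) \<and> depol n i c \<in> I - J"
  using mem_polarization1_iff[OF assms(1,3)] mem_polarization1_iff[OF assms(2,3)]
    polarization1_subset[of n i I] by blast

lemma pol1_mon_mem_polarization1_diff_iff:
  assumes "monomial_ideal n I" "monomial_ideal n J" "i < n" "a \<in> monoms n"
  shows "pol1_mon n i a \<in> polarization1 n i I - polarization1 n i J \<longleftrightarrow> a \<in> I - J"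
  using mem_polarization1_diff_iff[OF assms(1-3)] pol1_mon_monoms[OF assms(3,4)]
    depol_pol1_mon[OF assms(3,4)] by simp

lemma polarization1_diff_nonempty:
  assumes "monomial_ideal n I" and "monomial_ideal n J" and "i < n" and "I - J \<noteq> {}"
  shows "polarization1 n i I - polarization1 n i J \<noteq> {}"
proof -
  obtain a where a: "a \<in> I - J" using assms(4) by blast
  then have "a \<in> monoms n" using monomial_ideal_subset[OF assms(1)] by blast
  then have "pol1_mon n i a \<in> polarization1 n i I - polarization1 n i J"
    using pol1_mon_mem_polarization1_diff_iff[OF assms(1-3)] a by blast
  then show ?thesis by blast
qed

section \<open>Lifting Stanley decompositions to the polarization\<close>

(* depol maps X_i^b Y^e to X_i^0 if b = 0, to X_i^1 if b > 0 = e, and to X_i^(b+1) if b, e > 0.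
   Hence the preimage of a fixed X_i-exponent 1 is free in X_i, and that of any other fixed
   X_i-exponent, or of a free X_i, is free in Y. *)
definition lift_piece :: "nat \<Rightarrow> nat \<Rightarrow> mon \<times> nat set \<Rightarrow> mon \<times> nat set" where
  "lift_piece n i p = (pol1_mon n i (fst p),
     if i \<notin> snd p \<and> fst p i = 1 then insert i (snd p) else insert n (snd p))"

lemma mem_cone_lift_piece_iff:
  assumes "i < n" and "fst p \<in> monoms n" and "snd p \<subseteq> {..<n}"
  shows "c \<in> cone (fst (lift_piece n i p)) (snd (lift_piece n i p)) \<longleftrightarrow>
         depol n i c \<in> cone (fst p) (snd p)"
proof -
  have "fst p n = 0" "n \<notin> snd p" "i \<noteq> n" using assms by (auto simp: monoms_def)
  then show ?thesis
    unfolding mem_cone_split[where i=i and k=n]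
    by (cases "i \<in> snd p") (auto simp: lift_piece_def pol1_mon_def depol_def)
qed

lemma card_lift_piece:
  assumes "snd p \<subseteq> {..<n}"
  shows "card (snd (lift_piece n i p)) = Suc (card (snd p))"
proof -
  have "finite (snd p)" "n \<notin> snd p" using assms finite_subset by auto
  then show ?thesis by (auto simp: lift_piece_def)
qed

lemma lift_piece_stanley:
  assumes I: "monomial_ideal n I" and J: "monomial_ideal n J" and i: "i < n"
    and p: "snd p \<subseteq> {..<n}" "fst p \<in> monoms n" "cone (fst p) (snd p) \<subseteq> I - J"
  shows "snd (lift_piece n i p) \<subseteq> {..<Suc n} \<and> fst (lift_piece n i p) \<in> monoms (Suc n) \<and>
    cone (fst (lift_piece n i p)) (snd (lift_piece n i p)) \<subseteq>
      polarization1 n i I - polarization1 n i J"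
proof -
  have Z: "snd (lift_piece n i p) \<subseteq> {..<Suc n}" and m: "fst (lift_piece n i p) \<in> monoms (Suc n)"
    using p(1) pol1_mon_monoms[OF i p(2)] i by (auto simp: lift_piece_def)
  have "cone (fst (lift_piece n i p)) (snd (lift_piece n i p)) \<subseteq>
      polarization1 n i I - polarization1 n i J"
  proof
    fix c assume c: "c \<in> cone (fst (lift_piece n i p)) (snd (lift_piece n i p))"
    then have "c \<in> monoms (Suc n)" using cone_subset_monoms[OF m Z] by blast
    moreover have "depol n i c \<in> I - J" using c p mem_cone_lift_piece_iff[OF i p(2,1)] by blast
    ultimately show "c \<in> polarization1 n i I - polarization1 n i J"
      using mem_polarization1_diff_iff[OF I J i] by blast
  qed
  with Z m show ?thesis by blast
qed

lemma stanley_decomp_lift: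
  assumes I: "monomial_ideal n I" and J: "monomial_ideal n J" and i: "i < n"
    and D: "stanley_decomp n I J D"
  shows "stanley_decomp (Suc n) (polarization1 n i I) (polarization1 n i J) (lift_piece n i ` D)"
  unfolding stanley_decomp_iff_cones
proof (intro conjI ballI)
  show "finite (lift_piece n i ` D)" using D by (simp add: stanley_decomp_iff_cones)
next
  fix q assume "q \<in> lift_piece n i ` D"
  then obtain p where p: "p \<in> D" and q: "q = lift_piece n i p" by blast
  have "snd q \<subseteq> {..<Suc n} \<and> fst q \<in> monoms (Suc n) \<and>
      cone (fst q) (snd q) \<subseteq> polarization1 n i I - polarization1 n i J"
    using lift_piece_stanley[OF I J i] stanley_decomp_piece[OF D p] q by blast
  then show "case q of (m, Z) \<Rightarrow> Z \<subseteq> {..<Suc n} \<and> m \<in> monoms (Suc n) \<and>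
      cone m Z \<subseteq> polarization1 n i I - polarization1 n i J"
    by (cases q) simp
next
  fix c assume "c \<in> polarization1 n i I - polarization1 n i J"
  then have "depol n i c \<in> I - J" using mem_polarization1_diff_iff[OF I J i] by blast
  then obtain p where p: "p \<in> D" "depol n i c \<in> cone (fst p) (snd p)"
    and p_unique: "\<And>p'. p' \<in> D \<Longrightarrow> depol n i c \<in> cone (fst p') (snd p') \<Longrightarrow> p' = p"
    using stanley_decomp_cover[OF D] by metis
  have lift_iff: "c \<in> cone (fst (lift_piece n i p')) (snd (lift_piece n i p')) \<longleftrightarrow>
      depol n i c \<in> cone (fst p') (snd p')" if "p' \<in> D" for p'
    using mem_cone_lift_piece_iff[OF i] stanley_decomp_piece[OF D that] by blast
  show "\<exists>!q. q \<in> lift_piece n i ` D \<and> c \<in> cone (fst q) (snd q)"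
  proof
    show "lift_piece n i p \<in> lift_piece n i ` D \<and>
        c \<in> cone (fst (lift_piece n i p)) (snd (lift_piece n i p))"
      using p lift_iff by blast
  next
    fix q assume "q \<in> lift_piece n i ` D \<and> c \<in> cone (fst q) (snd q)"
    then show "q = lift_piece n i p" using lift_iff p_unique by blast
  qed
qed

lemma sdecomp_depth_lift:
  assumes D: "stanley_decomp n I J D" and "I - J \<noteq> {}"
  shows "Suc (sdecomp_depth D) \<le> sdecomp_depth (lift_piece n i ` D)"
proof -
  have "\<exists>p\<in>D. card (snd p) + 1 \<le> card (snd q) + 0" if q: "q \<in> lift_piece n i ` D" for q
  proof -
    obtain p where p: "p \<in> D" and "q = lift_piece n i p" using q by blast
    then have "card (snd q) = Suc (card (snd p))"
      using card_lift_piece stanley_decomp_piece[OF D p] by blast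
    with p show ?thesis by auto
  qed
  moreover have "finite D" "D \<noteq> {}"
    using D stanley_decomp_nonempty[OF D assms(2)] by (simp_all add: stanley_decomp_iff_cones)
  ultimately have "sdecomp_depth D + 1 \<le> sdecomp_depth (lift_piece n i ` D) + 0"
    by (intro sdecomp_depth_le_shift) auto
  then show ?thesis by simp
qed

lemma sdepth_polarization1_ge:
  assumes I: "monomial_ideal n I" and J: "monomial_ideal n J" and i: "i < n" and ne: "I - J \<noteq> {}"
  shows "Suc (sdepth n I J) \<le> sdepth (Suc n) (polarization1 n i I) (polarization1 n i J)"
proof -
  obtain D where D: "stanley_decomp n I J D" and depth: "sdepth n I J = sdecomp_depth D"
    using stanley_decomp_exists[OF I J] sdepth_attained ne by metis
  have "Suc (sdecomp_depth D) \<le> sdecomp_depth (lift_piece n i ` D)"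
    by (rule sdecomp_depth_lift[OF D ne])
  also have "\<dots> \<le> sdepth (Suc n) (polarization1 n i I) (polarization1 n i J)"
    by (rule sdecomp_depth_le_sdepth[OF stanley_decomp_lift[OF I J i D]
          polarization1_diff_nonempty[OF I J i ne]])
  finally show ?thesis using depth by simp
qed

section \<open>Restricting Stanley decompositions of the polarization\<close>

(* pol1_mon maps X_i^t to X_i^(pol1_exp_x t) Y^(pol1_exp_y t). *)
definition pol1_exp_x :: "nat \<Rightarrow> nat" where
  "pol1_exp_x t = (if t \<le> 1 then t else t - 1)"

definition pol1_exp_y :: "nat \<Rightarrow> nat" where
  "pol1_exp_y t = (if t \<le> 1 then 0 else 1)"

definition cone_exps :: "nat \<Rightarrow> nat \<Rightarrow> mon \<Rightarrow> nat set \<Rightarrow> nat set" where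
  "cone_exps n i m Z = {t. m i \<le> pol1_exp_x t \<and> (i \<notin> Z \<longrightarrow> pol1_exp_x t = m i) \<and>
                           m n \<le> pol1_exp_y t \<and> (n \<notin> Z \<longrightarrow> pol1_exp_y t = m n)}"

lemma mem_cone_pol1_mon_iff:
  assumes i: "i < n" and a: "a \<in> monoms n"
  shows "pol1_mon n i a \<in> cone m Z \<longleftrightarrow>
    (\<forall>j. j \<noteq> i \<longrightarrow> j \<noteq> n \<longrightarrow> m j \<le> a j \<and> (j \<notin> Z \<longrightarrow> a j = m j)) \<and> a i \<in> cone_exps n i m Z"
proof -
  have "pol1_mon n i a i = pol1_exp_x (a i)" "pol1_mon n i a n = pol1_exp_y (a i)"
    using i a by (auto simp: pol1_mon_def pol1_exp_x_def pol1_exp_y_def monoms_def)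
  moreover have "pol1_mon n i a j = a j" if "j \<noteq> i" "j \<noteq> n" for j
    using that by (simp add: pol1_mon_def)
  ultimately show ?thesis
    unfolding mem_cone_split[where i=i and k=n] cone_exps_def by auto
qed

lemma cone_exps_upward:
  assumes inf: "infinite (cone_exps n i m Z)" and t: "t \<in> cone_exps n i m Z" and "t \<le> t'"
  shows "t' \<in> cone_exps n i m Z"
proof -
  have "i \<in> Z"
  proof (rule ccontr)
    assume "i \<notin> Z"
    then have "cone_exps n i m Z \<subseteq> {0, 1, Suc (m i)}"
      by (auto simp: cone_exps_def pol1_exp_x_def split: if_splits)
    then show False using inf finite_subset by blast
  qed
  obtain t2 where t2: "t2 \<in> cone_exps n i m Z" "2 \<le> t2"
  proof -
    have "\<not> cone_exps n i m Z \<subseteq> {..1}" using inf finite_subset by blast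
    then show ?thesis using that by (auto simp: subset_iff not_le)
  qed
  then have "m n \<le> 1" "n \<notin> Z \<longrightarrow> m n = 1"
    by (auto simp: cone_exps_def pol1_exp_y_def)
  with \<open>i \<in> Z\<close> t \<open>t \<le> t'\<close> show ?thesis
    by (auto simp: cone_exps_def pol1_exp_x_def pol1_exp_y_def split: if_splits)
qed

lemma mem_cone_exps_iff_Least_le:
  assumes "infinite (cone_exps n i m Z)"
  shows "t \<in> cone_exps n i m Z \<longleftrightarrow> (LEAST t. t \<in> cone_exps n i m Z) \<le> t"
proof
  assume "(LEAST t. t \<in> cone_exps n i m Z) \<le> t"
  moreover have "(LEAST t. t \<in> cone_exps n i m Z) \<in> cone_exps n i m Z"
    using assms by (metis LeastI finite.emptyI ex_in_conv)
  ultimately show "t \<in> cone_exps n i m Z" using cone_exps_upward[OF assms] by blast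
qed (rule Least_le)

lemma infinite_cone_exps:
  assumes "i \<in> Z" and "n \<in> Z" and "t \<in> cone_exps n i m Z"
  shows "infinite (cone_exps n i m Z)"
proof -
  have "m n \<le> 1" using assms(3) by (auto simp: cone_exps_def pol1_exp_y_def split: if_splits)
  then have "k + m i + 2 \<in> cone_exps n i m Z" for k
    using assms by (auto simp: cone_exps_def pol1_exp_x_def pol1_exp_y_def)
  then show ?thesis
    unfolding finite_nat_set_iff_bounded_le by (metis add_leE not_less_eq_eq)
qed

(* The admissible exponents of X_i form a finite set or an up-set (mem_cone_exps_iff_Least_le):
   one cone with X_i fixed per exponent, or a single cone with X_i free. *)
definition restrict_piece :: "nat \<Rightarrow> nat \<Rightarrow> mon \<times> nat set \<Rightarrow> (mon \<times> nat set) set" where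
  "restrict_piece n i p =
     (if finite (cone_exps n i (fst p) (snd p))
      then (\<lambda>t. ((fst p)(i := t, n := 0), snd p - {n, i})) ` cone_exps n i (fst p) (snd p)
      else {((fst p)(i := LEAST t. t \<in> cone_exps n i (fst p) (snd p), n := 0),
             insert i (snd p - {n}))})"

lemma mem_cone_fixed_iff:
  assumes "i < n" and "a \<in> monoms n"
  shows "a \<in> cone (m(i := t, n := 0)) (Z - {n, i}) \<longleftrightarrow>
    (\<forall>j. j \<noteq> i \<longrightarrow> j \<noteq> n \<longrightarrow> m j \<le> a j \<and> (j \<notin> Z \<longrightarrow> a j = m j)) \<and> a i = t"
  using assms unfolding mem_cone_split[where i=i and k=n] by (auto simp: monoms_def)

lemma mem_cone_free_iff:
  assumes "i < n" and "a \<in> monoms n"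
  shows "a \<in> cone (m(i := r, n := 0)) (insert i (Z - {n})) \<longleftrightarrow>
    (\<forall>j. j \<noteq> i \<longrightarrow> j \<noteq> n \<longrightarrow> m j \<le> a j \<and> (j \<notin> Z \<longrightarrow> a j = m j)) \<and> r \<le> a i"
  using assms unfolding mem_cone_split[where i=i and k=n] by (auto simp: monoms_def)

lemma ex_restrict_piece_iff:
  assumes i: "i < n" and a: "a \<in> monoms n"
  shows "(\<exists>q\<in>restrict_piece n i p. a \<in> cone (fst q) (snd q)) \<longleftrightarrow>
    pol1_mon n i a \<in> cone (fst p) (snd p)"
proof -
  obtain m Z where p: "p = (m, Z)" by fastforce
  define matches_off_i where
    "matches_off_i \<longleftrightarrow> (\<forall>j. j \<noteq> i \<longrightarrow> j \<noteq> n \<longrightarrow> m j \<le> a j \<and> (j \<notin> Z \<longrightarrow> a j = m j))"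
  have "pol1_mon n i a \<in> cone m Z \<longleftrightarrow> matches_off_i \<and> a i \<in> cone_exps n i m Z"
    unfolding matches_off_i_def by (rule mem_cone_pol1_mon_iff[OF i a])
  moreover have "(\<exists>q\<in>restrict_piece n i (m, Z). a \<in> cone (fst q) (snd q)) \<longleftrightarrow>
      matches_off_i \<and> a i \<in> cone_exps n i m Z"
  proof (cases "finite (cone_exps n i m Z)")
    case True
    then show ?thesis
      by (auto simp: restrict_piece_def
          mem_cone_fixed_iff[OF i a, where m=m and Z=Z, folded matches_off_i_def])
  next
    case False
    then show ?thesis
      by (simp add: restrict_piece_def
          mem_cone_free_iff[OF i a, where m=m and Z=Z, folded matches_off_i_def]
          mem_cone_exps_iff_Least_le[OF False, of "a i"])
  qed
  ultimately show ?thesis using p by simp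
qed

lemma restrict_piece_unique:
  assumes i: "i < n" and a: "a \<in> monoms n"
    and "q \<in> restrict_piece n i p" "a \<in> cone (fst q) (snd q)"
    and "q' \<in> restrict_piece n i p" "a \<in> cone (fst q') (snd q')"
  shows "q = q'"
proof (cases "finite (cone_exps n i (fst p) (snd p))")
  case True
  then obtain t t' where "q = ((fst p)(i := t, n := 0), snd p - {n, i})"
    "q' = ((fst p)(i := t', n := 0), snd p - {n, i})"
    using assms(3,5) by (auto simp: restrict_piece_def)
  then show ?thesis using assms(4,6) mem_cone_fixed_iff[OF i a] by auto
next
  case False
  then show ?thesis using assms(3,5) by (simp add: restrict_piece_def)
qed

lemma restrict_piece_valid:
  assumes "q \<in> restrict_piece n i p" and "i < n"
    and "snd p \<subseteq> {..<Suc n}" and "fst p \<in> monoms (Suc n)"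
  shows "snd q \<subseteq> {..<n} \<and> fst q \<in> monoms n"
  using assms by (auto simp: restrict_piece_def monoms_def split: if_splits)

lemma card_restrict_piece:
  assumes q: "q \<in> restrict_piece n i p" and "finite (snd p)"
  shows "card (snd p) \<le> Suc (card (snd q))"
proof -
  obtain x where "snd p \<subseteq> insert x (snd q)" and "snd q \<subseteq> insert i (snd p)"
  proof (cases "finite (cone_exps n i (fst p) (snd p))")
    case True
    then obtain t where "t \<in> cone_exps n i (fst p) (snd p)" and q': "snd q = snd p - {n, i}"
      using q by (auto simp: restrict_piece_def)
    then have "\<not> (i \<in> snd p \<and> n \<in> snd p)" using True infinite_cone_exps by metis
    then show ?thesis
      using q' by (intro that[of "if n \<in> snd p then n else i"]) auto
  next
    case False
    then have "snd q = insert i (snd p - {n})" using q by (simp add: restrict_piece_def)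
    then show ?thesis by (intro that[of n]) auto
  qed
  moreover have "finite (insert i (snd p))" using assms(2) by simp
  ultimately have "card (snd p) \<le> card (insert x (snd q))"
    by (metis card_mono finite_insert finite_subset)
  also have "\<dots> \<le> Suc (card (snd q))" by (cases "finite (snd q)") (simp_all add: card_insert_if)
  finally show ?thesis .
qed

lemma restrict_piece_stanley:
  assumes I: "monomial_ideal n I" and J: "monomial_ideal n J" and i: "i < n"
    and p: "snd p \<subseteq> {..<Suc n}" "fst p \<in> monoms (Suc n)"
      "cone (fst p) (snd p) \<subseteq> polarization1 n i I - polarization1 n i J"
    and q: "q \<in> restrict_piece n i p"
  shows "snd q \<subseteq> {..<n} \<and> fst q \<in> monoms n \<and> cone (fst q) (snd q) \<subseteq> I - J"
proof -
  have Z: "snd q \<subseteq> {..<n}" and m: "fst q \<in> monoms n"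
    using restrict_piece_valid[OF q i p(1,2)] by auto
  have "cone (fst q) (snd q) \<subseteq> I - J"
  proof
    fix a assume a: "a \<in> cone (fst q) (snd q)"
    then have "a \<in> monoms n" using cone_subset_monoms[OF m Z] by blast
    moreover have "pol1_mon n i a \<in> cone (fst p) (snd p)"
      using ex_restrict_piece_iff[OF i \<open>a \<in> monoms n\<close>] q a by blast
    ultimately show "a \<in> I - J"
      using p(3) pol1_mon_mem_polarization1_diff_iff[OF I J i] by blast
  qed
  with Z m show ?thesis by blast
qed

lemma stanley_decomp_restrict:
  assumes I: "monomial_ideal n I" and J: "monomial_ideal n J" and i: "i < n"
    and D: "stanley_decomp (Suc n) (polarization1 n i I) (polarization1 n i J) D"
  shows "stanley_decomp n I J (\<Union>p\<in>D. restrict_piece n i p)"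
  unfolding stanley_decomp_iff_cones
proof (intro conjI ballI)
  show "finite (\<Union>p\<in>D. restrict_piece n i p)"
    using D by (auto simp: stanley_decomp_iff_cones restrict_piece_def)
next
  fix q assume "q \<in> (\<Union>p\<in>D. restrict_piece n i p)"
  then obtain p where p: "p \<in> D" and q: "q \<in> restrict_piece n i p" by blast
  have "snd q \<subseteq> {..<n} \<and> fst q \<in> monoms n \<and> cone (fst q) (snd q) \<subseteq> I - J"
    using restrict_piece_stanley[OF I J i _ _ _ q] stanley_decomp_piece[OF D p] by blast
  then show "case q of (m, Z) \<Rightarrow> Z \<subseteq> {..<n} \<and> m \<in> monoms n \<and> cone m Z \<subseteq> I - J"
    by (cases q) simp
next
  fix a assume a: "a \<in> I - J"
  then have am: "a \<in> monoms n" using monomial_ideal_subset[OF I] by blast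
  then have "pol1_mon n i a \<in> polarization1 n i I - polarization1 n i J"
    using pol1_mon_mem_polarization1_diff_iff[OF I J i] a by blast
  then obtain p where p: "p \<in> D" "pol1_mon n i a \<in> cone (fst p) (snd p)"
    and p_unique: "\<And>p'. p' \<in> D \<Longrightarrow> pol1_mon n i a \<in> cone (fst p') (snd p') \<Longrightarrow> p' = p"
    using stanley_decomp_cover[OF D] by metis
  obtain q where q: "q \<in> restrict_piece n i p" "a \<in> cone (fst q) (snd q)"
    using ex_restrict_piece_iff[OF i am] p(2) by blast
  show "\<exists>!q. q \<in> (\<Union>p\<in>D. restrict_piece n i p) \<and> a \<in> cone (fst q) (snd q)"
  proof
    show "q \<in> (\<Union>p\<in>D. restrict_piece n i p) \<and> a \<in> cone (fst q) (snd q)"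
      using p q by blast
  next
    fix q' assume "q' \<in> (\<Union>p\<in>D. restrict_piece n i p) \<and> a \<in> cone (fst q') (snd q')"
    then obtain p' where p': "p' \<in> D" "q' \<in> restrict_piece n i p'" "a \<in> cone (fst q') (snd q')"
      by blast
    then have "p' = p" using p_unique ex_restrict_piece_iff[OF i am] by blast
    then show "q' = q" using restrict_piece_unique[OF i am] p' q by blast
  qed
qed

lemma sdecomp_depth_restrict:
  assumes D: "stanley_decomp (Suc n) I' J' D"
    and E: "stanley_decomp n I J (\<Union>p\<in>D. restrict_piece n i p)"
    and "I - J \<noteq> {}"
  shows "sdecomp_depth D \<le> Suc (sdecomp_depth (\<Union>p\<in>D. restrict_piece n i p))"
proof -
  have "\<exists>p\<in>D. card (snd p) + 0 \<le> card (snd q) + 1" if "q \<in> (\<Union>p\<in>D. restrict_piece n i p)" for q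
  proof -
    from that obtain p where p: "p \<in> D" and q: "q \<in> restrict_piece n i p" by blast
    have "finite (snd p)" using stanley_decomp_piece[OF D p] finite_subset by blast
    then show ?thesis using card_restrict_piece[OF q] p by auto
  qed
  moreover have "finite D" "finite (\<Union>p\<in>D. restrict_piece n i p)"
    "(\<Union>p\<in>D. restrict_piece n i p) \<noteq> {}"
    using D E stanley_decomp_nonempty[OF E assms(3)] by (simp_all add: stanley_decomp_iff_cones)
  ultimately have "sdecomp_depth D + 0 \<le> sdecomp_depth (\<Union>p\<in>D. restrict_piece n i p) + 1"
    by (intro sdecomp_depth_le_shift) auto
  then show ?thesis by simp
qed

lemma sdepth_polarization1_le:
  assumes I: "monomial_ideal n I" and J: "monomial_ideal n J" and i: "i < n" and ne: "I - J \<noteq> {}"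
  shows "sdepth (Suc n) (polarization1 n i I) (polarization1 n i J) \<le> Suc (sdepth n I J)"
proof -
  obtain D where D: "stanley_decomp (Suc n) (polarization1 n i I) (polarization1 n i J) D"
    and depth: "sdepth (Suc n) (polarization1 n i I) (polarization1 n i J) = sdecomp_depth D"
    using stanley_decomp_exists[OF I J] stanley_decomp_lift[OF I J i]
      sdepth_attained polarization1_diff_nonempty[OF I J i ne] by metis
  have E: "stanley_decomp n I J (\<Union>p\<in>D. restrict_piece n i p)"
    by (rule stanley_decomp_restrict[OF I J i D])
  have "sdecomp_depth D \<le> Suc (sdecomp_depth (\<Union>p\<in>D. restrict_piece n i p))"
    by (rule sdecomp_depth_restrict[OF D E ne])
  also have "\<dots> \<le> Suc (sdepth n I J)"
    using sdecomp_depth_le_sdepth[OF E ne] by simp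
  finally show ?thesis using depth by simp
qed

theorem theorem4p3:
  fixes n i :: nat and I J :: "mon set"
  assumes "monomial_ideal n I" and "monomial_ideal n J" and "J \<subset> I" and "i < n"
  shows "int (sdepth n I J) =
         int (sdepth (Suc n) (polarization1 n i I) (polarization1 n i J)) - 1"
proof -
  have "I - J \<noteq> {}" using assms(3) by blast
  then have "sdepth (Suc n) (polarization1 n i I) (polarization1 n i J) = Suc (sdepth n I J)"
    using sdepth_polarization1_ge[OF assms(1,2,4)] sdepth_polarization1_le[OF assms(1,2,4)]
    by (simp add: le_antisym)
  then show ?thesis by simp
qed

end
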